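(* Let $m\in\mathcal{M}_D$, $\nu\in\mathcal{M}_S(m)$, $\lambda>0$ and $\sigma\ge0$. There exists a positive constant $C_{\lambda,m}$ such that for all $\phi$ on $\mathbb{R}^2$, \[ C_{\lambda,m}^{-1}\|E^\lambda_\nu\phi\|_{\dot H^\sigma\cap L^2}\le\|E^\lambda_\nu\phi\|_{\dot H^\sigma}+\|\phi\|_{L^2}\le C_{\lambda,m}\|E^\lambda_\nu\phi\|_{\dot H^\sigma\cap L^2}, \] \[ C_{\lambda,m}^{-1}\|E^\lambda_\nu\phi\|_{H^\sigma}\le\|E^\lambda_\nu\phi\|_{\dot H^\sigma}+\|\phi\|_{L^2}\le C_{\lambda,m}\|E^\lambda_\nu\phi\|_{H^\sigma}. \]
   Context: $\|f\|_{\dot H^\sigma}=\||\xi|^\sigma\hat f\|_{L^2}$, $\|f\|_{H^\sigma}=\|(1+|\xi|^2)^{\sigma/2}\hat f\|_{L^2}$, $\|f\|_{X\cap Y}=(\|f\|_X^2+\|f\|_Y^2)^{1/2}$. (O1) $w\in C^1([0,\infty))$, $w>0$, $w'\ge0$; (O2) $rw'(r)\le Cw(r)$; (O3) $w(r_1r_2)\le C(w(r_1)+w(r_2))$. $\mathcal{M}_W$: quotients of functions satisfying (O1)–(O3). $\mathcal{M}_D=\{m\ge0:1+m\in\mathcal{M}_W\}$. $\mathcal{M}_S(m)$ is the set of $\nu\in C^1([0,\infty))$ with $\nu,\nu'\ge0$, $\sup_{r\ge0}r\nu'(r)<\infty$, and $\nu(r)\le C(1+m(r))$ for some $C$. $E^\lambda_\nu$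 is the Fourier multiplier with symbol $e^{\lambda\nu(|\xi|)}$. *)

theory Defs
  imports "HOL-Analysis.Analysis"
begin

definition C1_half :: "(real \<Rightarrow> real) \<Rightarrow> (real \<Rightarrow> real) \<Rightarrow> bool" where
  "C1_half w w' \<longleftrightarrow>
     (\<forall>r\<ge>0. (w has_real_derivative w' r) (at r within {0..})) \<and> continuous_on {0..} w'"

definition admissible_weight :: "(real \<Rightarrow> real) \<Rightarrow> bool" where
  "admissible_weight w \<longleftrightarrow>
     (\<exists>w'. C1_half w w' \<and>
        (\<forall>r\<ge>0. w r > 0 \<and> w' r \<ge> 0) \<and>
        (\<exists>C. \<forall>r\<ge>0. r * w' r \<le> C * w r) \<and>
        (\<exists>C. \<forall>r1\<ge>0. \<forall>r2\<ge>0. w (r1 * r2) \<le> C * (w r1 + w r2)))"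

definition M_W :: "(real \<Rightarrow> real) \<Rightarrow> bool" where
  "M_W m \<longleftrightarrow> (\<exists>w1 w2. admissible_weight w1 \<and> admissible_weight w2 \<and>
                        (\<forall>r\<ge>0. m r = w1 r / w2 r))"

definition M_D :: "(real \<Rightarrow> real) \<Rightarrow> bool" where
  "M_D m \<longleftrightarrow> (\<forall>r\<ge>0. m r \<ge> 0) \<and> M_W (\<lambda>r. 1 + m r)"

definition M_S :: "(real \<Rightarrow> real) \<Rightarrow> (real \<Rightarrow> real) \<Rightarrow> bool" where
  "M_S m \<nu> \<longleftrightarrow>
     (\<exists>\<nu>'. C1_half \<nu> \<nu>' \<and> (\<forall>r\<ge>0. \<nu> r \<ge> 0 \<and> \<nu>' r \<ge> 0) \<and>
        (\<exists>B. \<forall>r\<ge>0. r * \<nu>' r \<le> B)) \<and>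
     (\<exists>C. \<forall>r\<ge>0. \<nu> r \<le> C * (1 + m r))"

definition enn_sqrt :: "ennreal \<Rightarrow> ennreal" where
  "enn_sqrt x = (if x = \<infinity> then \<infinity> else ennreal (sqrt (enn2real x)))"

text \<open>All norms are expressed through the Fourier transform \<psi> = \<phi>^ of \<phi> on \<real>^2
  (unitary normalisation, so that the L^2 norm of \<phi> equals that of \<psi>, Plancherel).\<close>
definition L2_hat :: "(real^2 \<Rightarrow> complex) \<Rightarrow> ennreal" where
  "L2_hat \<psi> = enn_sqrt (\<integral>\<^sup>+ \<xi>. ennreal ((cmod (\<psi> \<xi>))\<^sup>2) \<partial>lborel)"

definition Hdot_hat :: "real \<Rightarrow> (real^2 \<Rightarrow> complex) \<Rightarrow> ennreal" where
  "Hdot_hat \<sigma> \<psi> = enn_sqrt (\<integral>\<^sup>+ \<xi>. ennreal ((norm \<xi> powr \<sigma> * cmod (\<psi> \<xi>))\<^sup>2) \<partial>lborel)"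

definition H_hat :: "real \<Rightarrow> (real^2 \<Rightarrow> complex) \<Rightarrow> ennreal" where
  "H_hat \<sigma> \<psi> = enn_sqrt (\<integral>\<^sup>+ \<xi>. ennreal (((1 + (norm \<xi>)\<^sup>2) powr (\<sigma>/2) * cmod (\<psi> \<xi>))\<^sup>2) \<partial>lborel)"

definition Hdot_L2_hat :: "real \<Rightarrow> (real^2 \<Rightarrow> complex) \<Rightarrow> ennreal" where
  "Hdot_L2_hat \<sigma> \<psi> = enn_sqrt ((Hdot_hat \<sigma> \<psi>)\<^sup>2 + (L2_hat \<psi>)\<^sup>2)"

text \<open>Fourier transform of E^\<lambda>_\<nu> \<phi>: multiplication of \<phi>^ by e^{\<lambda>\<nu>(|\<xi>|)}.\<close>
definition E_hat :: "real \<Rightarrow> (real \<Rightarrow> real) \<Rightarrow> (real^2 \<Rightarrow> complex) \<Rightarrow> (real^2 \<Rightarrow> complex)" where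
  "E_hat lam \<nu> \<psi> = (\<lambda>\<xi>. complex_of_real (exp (lam * \<nu> (norm \<xi>))) * \<psi> \<xi>)"

end

theory Submission
  imports Defs
begin

(*
  On the Fourier side E^lam_nu multiplies by the weight exp (lam * nu |xi|) >= 1, which is
  bounded by some k on the unit ball because nu is continuous. So |psi| <= |E psi| everywhere
  and |E psi| <= k |psi| for |xi| < 1, whereas |xi|^sigma >= 1 for |xi| >= 1; hence
  |phi|_L2 <= |E phi|_L2 <= k |phi|_L2 + |E phi|_Hdot, which is the first equivalence.
  The second one follows from the equivalence of the H^sigma and Hdot^sigma cap L^2 norms,
  i.e. from (1 + r^2)^sigma <= 2^sigma (r^(2 sigma) + 1). All norms are compared through
  their squares, squaring being an order isomorphism of [0, \<infinity>].
*)

lemma ennreal_power2_le_power2_iff: "(x::ennreal)\<^sup>2 \<le> y\<^sup>2 \<longleftrightarrow> x \<le> y"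
proof (cases x rule: ennreal_cases; cases y rule: ennreal_cases)
  fix a b assume "x = ennreal a" "0 \<le> a" "y = ennreal b" "0 \<le> b"
  then show ?thesis by (simp add: ennreal_power power_mono_iff)
qed (simp_all add: ennreal_power top_unique)

lemma ennreal_power2_add_le: "(x::ennreal)\<^sup>2 + y\<^sup>2 \<le> (x + y)\<^sup>2"
  by (simp add: power2_sum add_increasing2)

lemma le_ennreal_mult_weaken:
  "x \<le> ennreal c * y \<Longrightarrow> c \<le> C \<Longrightarrow> x \<le> ennreal C * y"
  by (erule order_trans) (intro mult_right_mono ennreal_leI; simp)

lemma inverse_mult_le_ennreal:
  "0 < C \<Longrightarrow> x \<le> ennreal C * y \<Longrightarrow> ennreal (1 / C) * x \<le> y"
proof -
  assume "0 < C" "x \<le> ennreal C * y"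
  then have "ennreal (1 / C) * x \<le> ennreal (1 / C) * ennreal C * y"
    by (simp add: mult.assoc mult_left_mono)
  also have "\<dots> = y" using \<open>0 < C\<close> by (simp flip: ennreal_mult)
  finally show ?thesis .
qed

lemma enn_sqrt_power2 [simp]: "(enn_sqrt x)\<^sup>2 = x"
  by (cases x rule: ennreal_cases) (simp_all add: enn_sqrt_def ennreal_power)

lemma enn_sqrt_le_iff: "enn_sqrt x \<le> y \<longleftrightarrow> x \<le> y\<^sup>2"
  by (metis ennreal_power2_le_power2_iff enn_sqrt_power2)

lemma le_enn_sqrt_iff: "y \<le> enn_sqrt x \<longleftrightarrow> y\<^sup>2 \<le> x"
  by (metis ennreal_power2_le_power2_iff enn_sqrt_power2)

lemma enn_sqrt_mono: "x \<le> y \<Longrightarrow> enn_sqrt x \<le> enn_sqrt y"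
  by (simp add: enn_sqrt_le_iff)

lemma one_le_bessel_weight: "0 \<le> \<sigma> \<Longrightarrow> 1 \<le> (1 + r\<^sup>2) powr (\<sigma> / 2)"
  for r \<sigma> :: real
  by (intro ge_one_powr_ge_zero) auto

lemma riesz_weight_le_bessel_weight:
  fixes r \<sigma> :: real assumes "0 \<le> r" "0 \<le> \<sigma>"
  shows "r powr \<sigma> \<le> (1 + r\<^sup>2) powr (\<sigma> / 2)"
proof -
  have "r powr \<sigma> = (r\<^sup>2) powr (\<sigma> / 2)"
    using assms by (simp add: powr_powr flip: powr_numeral)
  also have "\<dots> \<le> (1 + r\<^sup>2) powr (\<sigma> / 2)"
    using assms by (intro powr_mono2) auto
  finally show ?thesis .
qed

lemma bessel_weight_power2_le:
  fixes r \<sigma> :: real assumes "0 \<le> r" "0 \<le> \<sigma>"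
  shows "((1 + r\<^sup>2) powr (\<sigma> / 2))\<^sup>2 \<le> 2 powr \<sigma> * ((r powr \<sigma>)\<^sup>2 + 1)"
proof -
  have "((1 + r\<^sup>2) powr (\<sigma> / 2))\<^sup>2 = (1 + r\<^sup>2) powr \<sigma>"
    by (simp add: powr_powr flip: powr_numeral)
  also have "\<dots> \<le> (2 * max 1 (r\<^sup>2)) powr \<sigma>"
    using assms by (intro powr_mono2) auto
  also have "\<dots> = 2 powr \<sigma> * max 1 (r\<^sup>2) powr \<sigma>"
    by (simp add: powr_mult)
  also have "\<dots> \<le> 2 powr \<sigma> * ((r powr \<sigma>)\<^sup>2 + 1)"
  proof (intro mult_left_mono)
    show "max 1 (r\<^sup>2) powr \<sigma> \<le> (r powr \<sigma>)\<^sup>2 + 1"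
      using assms by (cases "r\<^sup>2 \<le> 1")
        (simp_all add: max_def powr_powr mult.commute flip: powr_numeral)
  qed simp
  finally show ?thesis .
qed

lemma L2_hat_mono: "(\<And>\<xi>. cmod (\<psi> \<xi>) \<le> cmod (\<phi> \<xi>)) \<Longrightarrow> L2_hat \<psi> \<le> L2_hat \<phi>"
  unfolding L2_hat_def by (intro enn_sqrt_mono nn_integral_mono ennreal_leI power_mono) auto

lemma Hdot_L2_hat_power2: "(Hdot_L2_hat \<sigma> \<psi>)\<^sup>2 = (Hdot_hat \<sigma> \<psi>)\<^sup>2 + (L2_hat \<psi>)\<^sup>2"
  unfolding Hdot_L2_hat_def by simp

lemma Hdot_hat_le_Hdot_L2_hat: "Hdot_hat \<sigma> \<psi> \<le> Hdot_L2_hat \<sigma> \<psi>"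
  unfolding Hdot_L2_hat_def le_enn_sqrt_iff by simp

lemma L2_hat_le_Hdot_L2_hat: "L2_hat \<psi> \<le> Hdot_L2_hat \<sigma> \<psi>"
  unfolding Hdot_L2_hat_def le_enn_sqrt_iff by simp

lemma Hdot_L2_hat_le_add: "Hdot_L2_hat \<sigma> \<psi> \<le> Hdot_hat \<sigma> \<psi> + L2_hat \<psi>"
  unfolding Hdot_L2_hat_def enn_sqrt_le_iff by (rule ennreal_power2_add_le)

lemma Hdot_hat_le_H_hat: "0 \<le> \<sigma> \<Longrightarrow> Hdot_hat \<sigma> \<psi> \<le> H_hat \<sigma> \<psi>"
  unfolding Hdot_hat_def H_hat_def
  by (intro enn_sqrt_mono nn_integral_mono ennreal_leI power_mono mult_right_mono
      riesz_weight_le_bessel_weight) auto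

lemma L2_hat_le_H_hat: "0 \<le> \<sigma> \<Longrightarrow> L2_hat \<psi> \<le> H_hat \<sigma> \<psi>"
  unfolding L2_hat_def H_hat_def
  by (intro enn_sqrt_mono nn_integral_mono ennreal_leI power_mono)
    (simp_all add: mult_le_cancel_right1 one_le_bessel_weight)

lemma Hdot_L2_hat_le_H_hat:
  assumes "0 \<le> \<sigma>"
  shows "Hdot_L2_hat \<sigma> \<psi> \<le> ennreal (sqrt 2) * H_hat \<sigma> \<psi>"
proof -
  have "(Hdot_hat \<sigma> \<psi>)\<^sup>2 + (L2_hat \<psi>)\<^sup>2 \<le> (H_hat \<sigma> \<psi>)\<^sup>2 + (H_hat \<sigma> \<psi>)\<^sup>2"
    using assms by (intro add_mono power_mono_ennreal Hdot_hat_le_H_hat L2_hat_le_H_hat)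
  also have "\<dots> = (ennreal (sqrt 2) * H_hat \<sigma> \<psi>)\<^sup>2"
    by (simp add: power_mult_distrib ennreal_power mult_2)
  finally show ?thesis
    unfolding Hdot_L2_hat_def enn_sqrt_le_iff .
qed

lemma H_hat_le_Hdot_L2_hat:
  assumes "0 \<le> \<sigma>" and [measurable]: "\<psi> \<in> borel_measurable lborel"
  shows "H_hat \<sigma> \<psi> \<le> ennreal (sqrt (2 powr \<sigma>)) * Hdot_L2_hat \<sigma> \<psi>"
proof -
  have "(H_hat \<sigma> \<psi>)\<^sup>2 \<le> (\<integral>\<^sup>+\<xi>. ennreal (2 powr \<sigma>) *
      (ennreal ((norm \<xi> powr \<sigma> * cmod (\<psi> \<xi>))\<^sup>2) + ennreal ((cmod (\<psi> \<xi>))\<^sup>2)) \<partial>lborel)"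
    unfolding H_hat_def enn_sqrt_power2
  proof (intro nn_integral_mono)
    fix \<xi> :: "real^2"
    have "((1 + (norm \<xi>)\<^sup>2) powr (\<sigma> / 2) * cmod (\<psi> \<xi>))\<^sup>2
        \<le> 2 powr \<sigma> * ((norm \<xi> powr \<sigma> * cmod (\<psi> \<xi>))\<^sup>2 + (cmod (\<psi> \<xi>))\<^sup>2)"
      using mult_right_mono[OF bessel_weight_power2_le[OF norm_ge_zero assms(1)]
          zero_le_power2[of "cmod (\<psi> \<xi>)"]]
      by (simp add: power_mult_distrib algebra_simps)
    then show "ennreal (((1 + (norm \<xi>)\<^sup>2) powr (\<sigma> / 2) * cmod (\<psi> \<xi>))\<^sup>2)
        \<le> ennreal (2 powr \<sigma>) *
          (ennreal ((norm \<xi> powr \<sigma> * cmod (\<psi> \<xi>))\<^sup>2) + ennreal ((cmod (\<psi> \<xi>))\<^sup>2))"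
      by (simp add: ennreal_leI flip: ennreal_plus ennreal_mult)
  qed
  also have "\<dots> = (ennreal (sqrt (2 powr \<sigma>)) * Hdot_L2_hat \<sigma> \<psi>)\<^sup>2"
    by (simp add: Hdot_L2_hat_power2 Hdot_hat_def L2_hat_def power_mult_distrib ennreal_power
        nn_integral_cmult nn_integral_add)
  finally show ?thesis
    by (simp only: ennreal_power2_le_power2_iff)
qed

lemma L2_hat_le_low_freq_add_Hdot_hat:
  fixes u \<psi> :: "real^2 \<Rightarrow> complex" and \<sigma> k :: real
  assumes [measurable]: "u \<in> borel_measurable lborel" "\<psi> \<in> borel_measurable lborel"
    and "0 \<le> \<sigma>" "0 \<le> k" and low: "\<And>\<xi>. norm \<xi> < 1 \<Longrightarrow> cmod (u \<xi>) \<le> k * cmod (\<psi> \<xi>)"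
  shows "L2_hat u \<le> ennreal k * L2_hat \<psi> + Hdot_hat \<sigma> u"
proof -
  have pointwise: "(cmod (u \<xi>))\<^sup>2 \<le> k\<^sup>2 * (cmod (\<psi> \<xi>))\<^sup>2 + (norm \<xi> powr \<sigma> * cmod (u \<xi>))\<^sup>2"
    for \<xi>
  proof (cases "norm \<xi> < 1")
    case True
    then have "(cmod (u \<xi>))\<^sup>2 \<le> (k * cmod (\<psi> \<xi>))\<^sup>2"
      using low by (intro power_mono) auto
    then show ?thesis by (simp add: power_mult_distrib add_increasing2)
  next
    case False
    then have "1 \<le> norm \<xi> powr \<sigma>"
      using \<open>0 \<le> \<sigma>\<close> by (intro ge_one_powr_ge_zero) auto
    then have "(cmod (u \<xi>))\<^sup>2 \<le> (norm \<xi> powr \<sigma> * cmod (u \<xi>))\<^sup>2"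
      by (intro power_mono) (simp_all add: mult_le_cancel_right1)
    then show ?thesis by (simp add: add_increasing)
  qed
  have "(L2_hat u)\<^sup>2 \<le> (\<integral>\<^sup>+\<xi>. ennreal (k\<^sup>2) * ennreal ((cmod (\<psi> \<xi>))\<^sup>2)
      + ennreal ((norm \<xi> powr \<sigma> * cmod (u \<xi>))\<^sup>2) \<partial>lborel)"
    unfolding L2_hat_def enn_sqrt_power2 using pointwise
    by (intro nn_integral_mono) (simp add: ennreal_leI flip: ennreal_plus ennreal_mult)
  also have "\<dots> = (ennreal k * L2_hat \<psi>)\<^sup>2 + (Hdot_hat \<sigma> u)\<^sup>2"
    using \<open>0 \<le> k\<close> by (simp add: L2_hat_def Hdot_hat_def power_mult_distrib ennreal_power
        nn_integral_cmult nn_integral_add)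
  also have "\<dots> \<le> (ennreal k * L2_hat \<psi> + Hdot_hat \<sigma> u)\<^sup>2"
    by (rule ennreal_power2_add_le)
  finally show ?thesis
    by (simp only: ennreal_power2_le_power2_iff)
qed

lemma Hdot_add_L2_hat_le_Hdot_L2_hat:
  assumes "\<And>\<xi>. cmod (\<psi> \<xi>) \<le> cmod (u \<xi>)"
  shows "Hdot_hat \<sigma> u + L2_hat \<psi> \<le> 2 * Hdot_L2_hat \<sigma> u"
proof -
  have "L2_hat \<psi> \<le> Hdot_L2_hat \<sigma> u"
    using L2_hat_mono[OF assms] L2_hat_le_Hdot_L2_hat by (rule order_trans)
  then show ?thesis
    unfolding mult_2 by (intro add_mono Hdot_hat_le_Hdot_L2_hat)
qed

lemma Hdot_L2_hat_le_Hdot_add_L2_hat: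
  fixes u \<psi> :: "real^2 \<Rightarrow> complex" and \<sigma> k :: real
  assumes "u \<in> borel_measurable lborel" "\<psi> \<in> borel_measurable lborel"
    and "0 \<le> \<sigma>" "0 \<le> k" and "\<And>\<xi>. norm \<xi> < 1 \<Longrightarrow> cmod (u \<xi>) \<le> k * cmod (\<psi> \<xi>)"
  shows "Hdot_L2_hat \<sigma> u \<le> ennreal (2 + k) * (Hdot_hat \<sigma> u + L2_hat \<psi>)"
proof -
  have "Hdot_L2_hat \<sigma> u \<le> Hdot_hat \<sigma> u + L2_hat u"
    by (rule Hdot_L2_hat_le_add)
  also have "\<dots> \<le> Hdot_hat \<sigma> u + (ennreal k * L2_hat \<psi> + Hdot_hat \<sigma> u)"
    using L2_hat_le_low_freq_add_Hdot_hat[OF assms] by (rule add_left_mono)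
  also have "\<dots> = 2 * Hdot_hat \<sigma> u + ennreal k * L2_hat \<psi>"
    by (simp add: mult_2 add_ac)
  also have "\<dots> \<le> (2 * Hdot_hat \<sigma> u + ennreal k * L2_hat \<psi>)
      + (2 * L2_hat \<psi> + ennreal k * Hdot_hat \<sigma> u)"
    by simp
  also have "\<dots> = ennreal (2 + k) * (Hdot_hat \<sigma> u + L2_hat \<psi>)"
    using \<open>0 \<le> k\<close> by (simp add: ennreal_plus algebra_simps)
  finally show ?thesis .
qed

lemma H_hat_le_Hdot_add_L2_hat:
  fixes u \<psi> :: "real^2 \<Rightarrow> complex" and \<sigma> k :: real
  assumes "u \<in> borel_measurable lborel" "\<psi> \<in> borel_measurable lborel"
    and "0 \<le> \<sigma>" "0 \<le> k" and "\<And>\<xi>. norm \<xi> < 1 \<Longrightarrow> cmod (u \<xi>) \<le> k * cmod (\<psi> \<xi>)"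
  shows "H_hat \<sigma> u \<le> ennreal ((2 + k) * sqrt (2 powr \<sigma>)) * (Hdot_hat \<sigma> u + L2_hat \<psi>)"
proof -
  have "H_hat \<sigma> u \<le> ennreal (sqrt (2 powr \<sigma>)) * Hdot_L2_hat \<sigma> u"
    using assms(3,1) by (rule H_hat_le_Hdot_L2_hat)
  also have "\<dots> \<le> ennreal (sqrt (2 powr \<sigma>)) * (ennreal (2 + k) * (Hdot_hat \<sigma> u + L2_hat \<psi>))"
    using Hdot_L2_hat_le_Hdot_add_L2_hat[OF assms] by (rule mult_left_mono) auto
  finally show ?thesis
    using \<open>0 \<le> k\<close> by (simp add: ennreal_mult ac_simps)
qed

lemma Hdot_add_L2_hat_le_H_hat:
  assumes "0 \<le> \<sigma>" and "\<And>\<xi>. cmod (\<psi> \<xi>) \<le> cmod (u \<xi>)"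
  shows "Hdot_hat \<sigma> u + L2_hat \<psi> \<le> ennreal (2 * sqrt 2) * H_hat \<sigma> u"
proof -
  have "Hdot_hat \<sigma> u + L2_hat \<psi> \<le> ennreal 2 * Hdot_L2_hat \<sigma> u"
    using Hdot_add_L2_hat_le_Hdot_L2_hat[OF assms(2)] by simp
  also have "\<dots> \<le> ennreal 2 * (ennreal (sqrt 2) * H_hat \<sigma> u)"
    using Hdot_L2_hat_le_H_hat[OF assms(1)] by (rule mult_left_mono) (rule zero_le)
  finally show ?thesis
    by (simp add: ennreal_mult mult.assoc)
qed

lemma C1_half_imp_continuous: "C1_half w w' \<Longrightarrow> continuous_on {0..} w"
  unfolding C1_half_def continuous_on_eq_continuous_within by (auto intro: DERIV_continuous)

lemma M_S_imp_continuous: "M_S m \<nu> \<Longrightarrow> continuous_on {0..} \<nu>"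
  unfolding M_S_def by (auto intro: C1_half_imp_continuous)

lemma M_S_imp_nonneg: "M_S m \<nu> \<Longrightarrow> 0 \<le> r \<Longrightarrow> 0 \<le> \<nu> r"
  unfolding M_S_def by auto

lemma norm_E_hat: "cmod (E_hat lam \<nu> \<psi> \<xi>) = exp (lam * \<nu> (norm \<xi>)) * cmod (\<psi> \<xi>)"
  by (simp add: E_hat_def norm_mult)

lemma measurable_E_hat:
  assumes "continuous_on {0..} \<nu>" "\<psi> \<in> borel_measurable lborel"
  shows "E_hat lam \<nu> \<psi> \<in> borel_measurable lborel"
proof -
  have "continuous_on UNIV (\<lambda>\<xi>::real^2. \<nu> (norm \<xi>))"
    by (rule continuous_on_compose2[OF assms(1) continuous_on_norm_id]) auto
  then have [measurable]: "(\<lambda>\<xi>::real^2. \<nu> (norm \<xi>)) \<in> borel_measurable lborel"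
    by (simp add: borel_measurable_continuous_onI)
  show ?thesis
    unfolding E_hat_def using assms(2) by measurable
qed

lemma norm_le_norm_E_hat:
  assumes "0 \<le> lam" "\<And>r. 0 \<le> r \<Longrightarrow> 0 \<le> \<nu> r"
  shows "cmod (\<psi> \<xi>) \<le> cmod (E_hat lam \<nu> \<psi> \<xi>)"
  unfolding norm_E_hat using assms by (simp add: mult_le_cancel_right1)

lemma norm_E_hat_le_on_unit_ball:
  assumes "0 \<le> lam" "\<And>r. r \<in> {0..1} \<Longrightarrow> \<nu> r \<le> M" "norm \<xi> < 1"
  shows "cmod (E_hat lam \<nu> \<psi> \<xi>) \<le> exp (lam * M) * cmod (\<psi> \<xi>)"
  unfolding norm_E_hat using assms by (intro mult_right_mono) (auto intro: mult_left_mono)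

lemma E_hat_bounds:
  assumes "M_S m \<nu>" "0 \<le> lam"
  obtains k where "0 \<le> k" "\<And>\<psi> \<xi>. cmod (\<psi> \<xi>) \<le> cmod (E_hat lam \<nu> \<psi> \<xi>)"
    "\<And>\<psi> \<xi>. norm \<xi> < 1 \<Longrightarrow> cmod (E_hat lam \<nu> \<psi> \<xi>) \<le> k * cmod (\<psi> \<xi>)"
proof -
  have "continuous_on {0..1} \<nu>"
    using M_S_imp_continuous[OF assms(1)] by (rule continuous_on_subset) auto
  then obtain r0 where M: "\<forall>r\<in>{0..1}. \<nu> r \<le> \<nu> r0"
    using continuous_attains_sup[of "{0..1}" \<nu>] by auto
  show ?thesis
  proof (rule that)
    show "0 \<le> exp (lam * \<nu> r0)" by simp
    show "cmod (\<psi> \<xi>) \<le> cmod (E_hat lam \<nu> \<psi> \<xi>)" for \<psi> \<xi>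
      using assms(2) M_S_imp_nonneg[OF assms(1)] by (rule norm_le_norm_E_hat)
    show "cmod (E_hat lam \<nu> \<psi> \<xi>) \<le> exp (lam * \<nu> r0) * cmod (\<psi> \<xi>)"
      if "norm \<xi> < 1" for \<psi> \<xi>
      using M that by (intro norm_E_hat_le_on_unit_ball[OF assms(2)]) auto
  qed
qed

theorem lemma6p3:
  fixes m \<nu> :: "real \<Rightarrow> real" and lam \<sigma> :: real
  assumes "M_D m" and "M_S m \<nu>" and "lam > 0" and "\<sigma> \<ge> 0"
  shows "\<exists>C::real. C > 0 \<and>
    (\<forall>\<psi> :: real^2 \<Rightarrow> complex. \<psi> \<in> borel_measurable lborel \<longrightarrow>
       ennreal (1 / C) * Hdot_L2_hat \<sigma> (E_hat lam \<nu> \<psi>)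
         \<le> Hdot_hat \<sigma> (E_hat lam \<nu> \<psi>) + L2_hat \<psi> \<and>
       Hdot_hat \<sigma> (E_hat lam \<nu> \<psi>) + L2_hat \<psi>
         \<le> ennreal C * Hdot_L2_hat \<sigma> (E_hat lam \<nu> \<psi>) \<and>
       ennreal (1 / C) * H_hat \<sigma> (E_hat lam \<nu> \<psi>)
         \<le> Hdot_hat \<sigma> (E_hat lam \<nu> \<psi>) + L2_hat \<psi> \<and>
       Hdot_hat \<sigma> (E_hat lam \<nu> \<psi>) + L2_hat \<psi>
         \<le> ennreal C * H_hat \<sigma> (E_hat lam \<nu> \<psi>))"
proof -
  obtain k where k: "0 \<le> k"
    and E_ge: "\<And>\<psi> \<xi>. cmod (\<psi> \<xi>) \<le> cmod (E_hat lam \<nu> \<psi> \<xi>)"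
    and E_low: "\<And>\<psi> \<xi>. norm \<xi> < 1 \<Longrightarrow> cmod (E_hat lam \<nu> \<psi> \<xi>) \<le> k * cmod (\<psi> \<xi>)"
    by (rule E_hat_bounds[OF assms(2) less_imp_le[OF assms(3)]]) (rule that)
  define t where "t = (2 + k) * sqrt (2 powr \<sigma>)"
  define C where "C = 2 * t"
  have "1 \<le> sqrt (2 powr \<sigma>)"
    using assms(4) by (simp add: ge_one_powr_ge_zero)
  then have "2 + k \<le> t" "2 \<le> t"
    unfolding t_def using k mult_mono[of 2 "2 + k" 1 "sqrt (2 powr \<sigma>)"]
    by (simp_all add: mult_le_cancel_left1)
  moreover have "sqrt 2 \<le> 2"
    using real_sqrt_le_mono[of 2 4] by simp
  ultimately have C_ge: "2 + k \<le> C" "2 \<le> C" "t \<le> C" "2 * sqrt 2 \<le> C" and "0 < C"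
    unfolding C_def by simp_all
  show ?thesis
  proof (intro exI[of _ C] conjI allI impI)
    show "0 < C" by fact
    fix \<psi> :: "real^2 \<Rightarrow> complex" assume \<psi>: "\<psi> \<in> borel_measurable lborel"
    let ?u = "E_hat lam \<nu> \<psi>" and ?S = "Hdot_hat \<sigma> (E_hat lam \<nu> \<psi>) + L2_hat \<psi>"
    have u: "?u \<in> borel_measurable lborel"
      using measurable_E_hat[OF M_S_imp_continuous[OF assms(2)] \<psi>] .
    note E_ge = E_ge[where \<psi> = \<psi>] and E_low = E_low[where \<psi> = \<psi>]
    have "?S \<le> ennreal 2 * Hdot_L2_hat \<sigma> ?u"
      using Hdot_add_L2_hat_le_Hdot_L2_hat[OF E_ge] by simp
    then show "?S \<le> ennreal C * Hdot_L2_hat \<sigma> ?u"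
      using C_ge(2) by (rule le_ennreal_mult_weaken)
    show "?S \<le> ennreal C * H_hat \<sigma> ?u"
      using Hdot_add_L2_hat_le_H_hat[OF assms(4) E_ge] C_ge(4) by (rule le_ennreal_mult_weaken)
    show "ennreal (1 / C) * Hdot_L2_hat \<sigma> ?u \<le> ?S"
      using Hdot_L2_hat_le_Hdot_add_L2_hat[OF u \<psi> assms(4) k E_low] C_ge(1)
      by (rule inverse_mult_le_ennreal[OF \<open>0 < C\<close> le_ennreal_mult_weaken])
    show "ennreal (1 / C) * H_hat \<sigma> ?u \<le> ?S"
      using H_hat_le_Hdot_add_L2_hat[OF u \<psi> assms(4) k E_low, folded t_def] C_ge(3)
      by (rule inverse_mult_le_ennreal[OF \<open>0 < C\<close> le_ennreal_mult_weaken])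
  qed
qed

end
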